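(* Let $\mathcal{X}$ be a totally ordered set equipped with a $\sigma$-algebra $\mathcal{F}$, let $n\ge 1$, and let $\mathcal{S}_{n,\bm{\nu}}$ be the set of labelings $\sigma:\{1,\dots,n\}\to\{1,\dots,K\}$ with $|\sigma^{-1}(k)|=n\nu_k$ for each $k$, for a fixed vector of group proportions $\bm{\nu}=(\nu_1,\dots,\nu_K)$. For $\theta\in\{0,1\}$ and $k\in\{1,\dots,K\}$ let $P_{\theta,k}$ be probability measures on $(\mathcal{X},\mathcal{F})$, and for $\sigma\in\mathcal{S}_{n,\bm{\nu}}$ let $\mathbb{P}_{\theta;\sigma}=\bigotimes_{i=1}^n P_{\theta,\sigma(i)}$ on $(\mathcal{X}^n,\mathcal{F}^{\otimes n})$. For a measurable test $\phi:\mathcal{X}^n\to[0,1]$ define $\mathsf{P_F}(\phi)=\max_{\sigma\in\mathcal{S}_{n,\bm{\nu}}}\mathbb{E}_{\mathbb{P}_{0;\sigma}}[\phi(X^n)]$ and $\mathsf{P_M}(\phi)=\max_{\sigma\in\mathcal{S}_{n,\bm{\nu}}}\mathbb{E}_{\mathbb{P}_{1;\sigma}}[1-\phi(X^n)]$. Then for any measurable test $\psi:\mathcal{X}^n\to[0,1]$ there exists a symmetric test $\phi$ such that $\mathsf{P_F}(\phi)\le\mathsf{P_F}(\psi)$ and $\mathsf{P_M}(\phi)\le\mathsf{P_M}(\psi)$.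
   Context: The ordering map $\Pi:\mathcal{X}^n\to\tilde{\mathcal{X}}^n$, where $\tilde{\mathcal{X}}^n=\{x^n\in\mathcal{X}^n: x_1\ge x_2\ge\dots\ge x_n\}$ with $\sigma$-algebra $\tilde{\mathcal{F}}=\mathcal{F}^{\otimes n}\cap\tilde{\mathcal{X}}^n$, sends $x^n$ to the rearrangement of its coordinates in non-increasing order. A test $\phi:\mathcal{X}^n\to[0,1]$ is called symmetric if $\phi=\tilde{\phi}\circ\Pi$ for some $\tilde{\mathcal{F}}$-measurable $\tilde{\phi}:\tilde{\mathcal{X}}^n\to[0,1]$. The $\sigma$-algebra $\mathcal{F}^{\otimes n}$ is assumed closed under coordinate permutations: for every $\mathcal{A}\in\mathcal{F}^{\otimes n}$ and every permutation $\tau$ of $\{1,\dots,n\}$, $\{(x_{\tau(1)},\dots,x_{\tau(n)}): x^n\in\mathcal{A}\}\in\mathcal{F}^{\otimes n}$. *)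

theory Defs
  imports "HOL-Probability.Probability"
begin

text \<open>Points of X^n are functions on the index set {..<n} (coordinates 0..n-1),
  extensional outside, as in the product measure PiM.\<close>

abbreviation prodM :: "nat \<Rightarrow> 'a measure \<Rightarrow> (nat \<Rightarrow> 'a) measure" where
  "prodM n M \<equiv> PiM {..<n} (\<lambda>_. M)"

definition ord_map :: "nat \<Rightarrow> (nat \<Rightarrow> 'a::linorder) \<Rightarrow> (nat \<Rightarrow> 'a)" where
  "ord_map n x = (\<lambda>i. if i < n then rev (sort (map x [0..<n])) ! i else undefined)"

definition ordered_pts :: "nat \<Rightarrow> 'a::linorder measure \<Rightarrow> (nat \<Rightarrow> 'a) set" where
  "ordered_pts n M = {x \<in> space (prodM n M). \<forall>i j. i \<le> j \<and> j < n \<longrightarrow> x j \<le> x i}"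

definition symmetric_test :: "nat \<Rightarrow> 'a::linorder measure \<Rightarrow> ((nat \<Rightarrow> 'a) \<Rightarrow> real) \<Rightarrow> bool" where
  "symmetric_test n M \<phi> \<longleftrightarrow>
     (\<exists>\<phi>t. \<phi>t \<in> borel_measurable (restrict_space (prodM n M) (ordered_pts n M)) \<and>
           (\<forall>y\<in>ordered_pts n M. 0 \<le> \<phi>t y \<and> \<phi>t y \<le> 1) \<and>
           (\<forall>x\<in>space (prodM n M). \<phi> x = \<phi>t (ord_map n x)))"

text \<open>Labelings sigma : {1..n} -> {1..K} with |sigma^{-1}(k)| = n nu_k (indices shifted to 0..n-1).\<close>
definition labelings :: "nat \<Rightarrow> nat \<Rightarrow> (nat \<Rightarrow> real) \<Rightarrow> (nat \<Rightarrow> nat) set" where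
  "labelings n K \<nu> = {\<sigma> \<in> {..<n} \<rightarrow>\<^sub>E {1..K}.
      \<forall>k\<in>{1..K}. real (card {i\<in>{..<n}. \<sigma> i = k}) = real n * \<nu> k}"

definition P_F :: "nat \<Rightarrow> nat \<Rightarrow> (nat \<Rightarrow> real) \<Rightarrow> (nat \<Rightarrow> nat \<Rightarrow> 'a measure)
                   \<Rightarrow> ((nat \<Rightarrow> 'a) \<Rightarrow> real) \<Rightarrow> real" where
  "P_F n K \<nu> P \<phi> = Max ((\<lambda>\<sigma>. \<integral>x. \<phi> x \<partial>(PiM {..<n} (\<lambda>i. P 0 (\<sigma> i)))) ` labelings n K \<nu>)"

definition P_M :: "nat \<Rightarrow> nat \<Rightarrow> (nat \<Rightarrow> real) \<Rightarrow> (nat \<Rightarrow> nat \<Rightarrow> 'a measure)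
                   \<Rightarrow> ((nat \<Rightarrow> 'a) \<Rightarrow> real) \<Rightarrow> real" where
  "P_M n K \<nu> P \<phi> = Max ((\<lambda>\<sigma>. \<integral>x. 1 - \<phi> x \<partial>(PiM {..<n} (\<lambda>i. P 1 (\<sigma> i)))) ` labelings n K \<nu>)"

end

theory Submission
  imports Defs "HOL-Combinatorics.Permutations"
begin

text \<open>Average \<open>\<psi>\<close> over all \<open>n!\<close> permutations of the coordinates. The average is
  permutation invariant, hence a function of the ordered sample, i.e. a symmetric test.
  Permuting the coordinates by \<open>\<tau>\<close> turns the product measure of a labeling \<open>\<sigma>\<close> into that
  of \<open>\<sigma> \<circ> \<tau>\<close>, which is again a labeling with the prescribed group sizes. So each of the
  \<open>n!\<close> permuted error probabilities, and hence their average, is bounded by the worst case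
  over labelings.\<close>

definition permute_coords :: "nat \<Rightarrow> (nat \<Rightarrow> nat) \<Rightarrow> (nat \<Rightarrow> 'a) \<Rightarrow> nat \<Rightarrow> 'a" where
  "permute_coords n \<tau> x = (\<lambda>i\<in>{..<n}. x (\<tau> i))"

definition symmetrize :: "nat \<Rightarrow> ((nat \<Rightarrow> 'a) \<Rightarrow> real) \<Rightarrow> (nat \<Rightarrow> 'a) \<Rightarrow> real" where
  "symmetrize n g x = (\<Sum>\<tau> | \<tau> permutes {..<n}. g (permute_coords n \<tau> x)) / fact n"

lemma measurable_permute_coords:
  assumes "\<tau> permutes {..<n}"
  shows "permute_coords n \<tau> \<in> measurable (prodM n M) (prodM n M)"
  unfolding permute_coords_def
  using permutes_in_image[OF assms] by (intro measurable_restrict) auto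

lemma permute_coords_permute_coords:
  assumes "\<tau> permutes {..<n}"
  shows "permute_coords n \<tau> (permute_coords n \<tau>' x) = permute_coords n (\<tau>' \<circ> \<tau>) x"
  using permutes_in_image[OF assms] unfolding permute_coords_def by (auto simp: fun_eq_iff)

lemma ord_map_eq_permute_coords:
  obtains \<tau> where "\<tau> permutes {..<n}" "ord_map n x = permute_coords n \<tau> x"
proof -
  let ?xs = "map x [0..<n]"
  have "mset (rev (sort ?xs)) = mset ?xs" by simp
  then obtain \<tau> where \<tau>: "\<tau> permutes {..<n}" "permute_list \<tau> ?xs = rev (sort ?xs)"
    by (metis mset_eq_permutation length_map length_upt diff_zero)
  have "rev (sort ?xs) ! i = x (\<tau> i)" if "i < n" for i
  proof -
    have "\<tau> i < n"
      using permutes_in_image[OF \<tau>(1)] that by simp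
    then show ?thesis
      using permute_list_nth[of \<tau> ?xs i] \<tau> that by simp
  qed
  with \<tau>(1) show thesis
    by (intro that[of \<tau>]) (auto simp: ord_map_def permute_coords_def)
qed

lemma symmetrize_permute_coords:
  assumes "\<tau> permutes {..<n}"
  shows "symmetrize n g (permute_coords n \<tau> x) = symmetrize n g x"
proof -
  have "(\<Sum>\<tau>' | \<tau>' permutes {..<n}. g (permute_coords n \<tau>' (permute_coords n \<tau> x)))
      = (\<Sum>\<tau>' | \<tau>' permutes {..<n}. g (permute_coords n (\<tau> \<circ> \<tau>') x))"
    by (intro sum.cong refl) (simp add: permute_coords_permute_coords)
  also have "\<dots> = (\<Sum>\<tau>' | \<tau>' permutes {..<n}. g (permute_coords n \<tau>' x))"
    using setum_permutations_compose_left[OF assms, of "\<lambda>\<tau>'. g (permute_coords n \<tau>' x)"] by simp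
  finally show ?thesis unfolding symmetrize_def by simp
qed

lemma symmetrize_ord_map: "symmetrize n g (ord_map n x) = symmetrize n g x"
  by (metis ord_map_eq_permute_coords symmetrize_permute_coords)

lemma one_minus_symmetrize: "1 - symmetrize n g x = symmetrize n (\<lambda>y. 1 - g y) x"
  using card_permutations[of "{..<n}" n]
  by (simp add: symmetrize_def sum_subtractf diff_divide_distrib)

lemma measurable_symmetrize:
  assumes "g \<in> borel_measurable (prodM n M)"
  shows "symmetrize n g \<in> borel_measurable (prodM n M)"
  unfolding symmetrize_def
  using measurable_comp[OF measurable_permute_coords assms]
  by (auto simp: o_def intro!: borel_measurable_divide borel_measurable_sum)

lemma symmetrize_bounds:
  assumes "\<forall>x\<in>space (prodM n M). 0 \<le> g x \<and> g x \<le> 1" "x \<in> space (prodM n M)"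
  shows "0 \<le> symmetrize n g x \<and> symmetrize n g x \<le> 1"
proof -
  have g: "0 \<le> g (permute_coords n \<tau> x) \<and> g (permute_coords n \<tau> x) \<le> 1"
    if "\<tau> permutes {..<n}" for \<tau>
    using assms measurable_space[OF measurable_permute_coords[OF that]] by blast
  have "(\<Sum>\<tau> | \<tau> permutes {..<n}. g (permute_coords n \<tau> x)) \<le> (\<Sum>\<tau> | \<tau> permutes {..<n}. 1)"
    using g by (intro sum_mono) auto
  moreover have "0 \<le> (\<Sum>\<tau> | \<tau> permutes {..<n}. g (permute_coords n \<tau> x))"
    using g by (intro sum_nonneg) auto
  ultimately show ?thesis
    using card_permutations[of "{..<n}" n] unfolding symmetrize_def by (simp add: divide_le_eq_1)
qed

lemma symmetric_test_symmetrize: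
  assumes "g \<in> borel_measurable (prodM n M)" "\<forall>x\<in>space (prodM n M). 0 \<le> g x \<and> g x \<le> 1"
  shows "symmetric_test n M (symmetrize n g)"
  unfolding symmetric_test_def
proof (intro exI conjI ballI)
  show "symmetrize n g \<in> borel_measurable (restrict_space (prodM n M) (ordered_pts n M))"
    by (intro measurable_restrict_space1 measurable_symmetrize assms(1))
  show "0 \<le> symmetrize n g y" "symmetrize n g y \<le> 1" if "y \<in> ordered_pts n M" for y
    using symmetrize_bounds[OF assms(2)] that unfolding ordered_pts_def by auto
  show "symmetrize n g x = symmetrize n g (ord_map n x)" for x
    by (simp add: symmetrize_ord_map)
qed

lemma integral_permute_coords:
  fixes g :: "(nat \<Rightarrow> 'a) \<Rightarrow> real"
  assumes \<tau>: "\<tau> permutes {..<n}"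
    and Q: "\<And>i. i < n \<Longrightarrow> prob_space (Q i)" "\<And>i. i < n \<Longrightarrow> sets (Q i) = sets M"
    and g: "g \<in> borel_measurable (prodM n M)"
  shows "(\<integral>x. g (permute_coords n \<tau> x) \<partial>PiM {..<n} Q) = (\<integral>x. g x \<partial>PiM {..<n} (\<lambda>i. Q (\<tau> i)))"
proof -
  have sets_Q: "sets (PiM {..<n} Q) = sets (prodM n M)"
    using Q(2) by (intro sets_PiM_cong) auto
  have sets_Q\<tau>: "sets (PiM {..<n} (\<lambda>i. Q (\<tau> i))) = sets (prodM n M)"
    using Q(2) permutes_in_image[OF \<tau>] by (intro sets_PiM_cong) auto
  have "permute_coords n \<tau> \<in> measurable (PiM {..<n} Q) (PiM {..<n} (\<lambda>i. Q (\<tau> i)))"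
    using measurable_permute_coords[OF \<tau>] by (simp add: measurable_cong_sets[OF sets_Q sets_Q\<tau>])
  moreover have "g \<in> borel_measurable (PiM {..<n} (\<lambda>i. Q (\<tau> i)))"
    using g by (simp add: measurable_cong_sets[OF sets_Q\<tau> refl])
  ultimately have "(\<integral>x. g (permute_coords n \<tau> x) \<partial>PiM {..<n} Q)
      = (\<integral>x. g x \<partial>distr (PiM {..<n} Q) (PiM {..<n} (\<lambda>i. Q (\<tau> i))) (permute_coords n \<tau>))"
    by (rule integral_distr[symmetric])
  also have "distr (PiM {..<n} Q) (PiM {..<n} (\<lambda>i. Q (\<tau> i))) (permute_coords n \<tau>)
      = PiM {..<n} (\<lambda>i. Q (\<tau> i))"
    unfolding permute_coords_def using Q(1) permutes_inj_on[OF \<tau>] permutes_in_image[OF \<tau>]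
    by (intro distr_PiM_reindex) auto
  finally show ?thesis .
qed

lemma finite_labelings: "finite (labelings n K \<nu>)"
  by (rule finite_subset[of _ "{..<n} \<rightarrow>\<^sub>E {1..K}"]) (auto simp: labelings_def intro: finite_PiE)

lemma labelings_permute:
  assumes \<sigma>: "\<sigma> \<in> labelings n K \<nu>" and \<tau>: "\<tau> permutes {..<n}"
  shows "restrict (\<sigma> \<circ> \<tau>) {..<n} \<in> labelings n K \<nu>"
proof -
  have "card {i\<in>{..<n}. restrict (\<sigma> \<circ> \<tau>) {..<n} i = k} = card {i\<in>{..<n}. \<sigma> i = k}" for k
  proof -
    have "\<tau> ` {i\<in>{..<n}. restrict (\<sigma> \<circ> \<tau>) {..<n} i = k} = {i\<in>{..<n}. \<sigma> i = k}"
      using permutes_in_image[OF \<tau>] permutes_image[OF \<tau>] by (auto simp: image_iff)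
    then show ?thesis
      using card_image[OF permutes_inj_on[OF \<tau>]] by metis
  qed
  moreover have "restrict (\<sigma> \<circ> \<tau>) {..<n} \<in> {..<n} \<rightarrow>\<^sub>E {1..K}"
    using \<sigma> permutes_in_image[OF \<tau>] unfolding labelings_def by auto
  ultimately show ?thesis
    using \<sigma> unfolding labelings_def by simp
qed

lemma integral_symmetrize_le_Max:
  fixes Q :: "nat \<Rightarrow> 'a measure" and g :: "(nat \<Rightarrow> 'a) \<Rightarrow> real"
  assumes Q: "\<And>k. k \<in> {1..K} \<Longrightarrow> prob_space (Q k)" "\<And>k. k \<in> {1..K} \<Longrightarrow> sets (Q k) = sets M"
    and g: "g \<in> borel_measurable (prodM n M)" "\<And>x. x \<in> space (prodM n M) \<Longrightarrow> \<bar>g x\<bar> \<le> B"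
    and \<sigma>: "\<sigma> \<in> labelings n K \<nu>"
  shows "(\<integral>x. symmetrize n g x \<partial>PiM {..<n} (\<lambda>i. Q (\<sigma> i)))
       \<le> Max ((\<lambda>\<sigma>. \<integral>x. g x \<partial>PiM {..<n} (\<lambda>i. Q (\<sigma> i))) ` labelings n K \<nu>)"
    (is "_ \<le> ?worst")
proof -
  let ?Q\<sigma> = "PiM {..<n} (\<lambda>i. Q (\<sigma> i))"
  have \<sigma>_range: "\<sigma> i \<in> {1..K}" if "i < n" for i
    using \<sigma> that unfolding labelings_def by auto
  interpret Q\<sigma>: prob_space ?Q\<sigma>
    using Q(1) \<sigma>_range by (intro prob_space_PiM) auto
  have sets_Q\<sigma>: "sets ?Q\<sigma> = sets (prodM n M)"
    using Q(2) \<sigma>_range by (intro sets_PiM_cong) auto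
  have permuted_le: "(\<integral>x. g (permute_coords n \<tau> x) \<partial>?Q\<sigma>) \<le> ?worst" if \<tau>: "\<tau> permutes {..<n}" for \<tau>
  proof -
    have "(\<integral>x. g (permute_coords n \<tau> x) \<partial>?Q\<sigma>) = (\<integral>x. g x \<partial>PiM {..<n} (\<lambda>i. Q (\<sigma> (\<tau> i))))"
      using Q \<sigma>_range g(1) by (intro integral_permute_coords \<tau>) auto
    also have "PiM {..<n} (\<lambda>i. Q (\<sigma> (\<tau> i))) = PiM {..<n} (\<lambda>i. Q (restrict (\<sigma> \<circ> \<tau>) {..<n} i))"
      by (rule PiM_cong) auto
    also have "(\<integral>x. g x \<partial>PiM {..<n} (\<lambda>i. Q (restrict (\<sigma> \<circ> \<tau>) {..<n} i))) \<le> ?worst"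
      by (intro Max_ge finite_imageI finite_labelings imageI labelings_permute[OF \<sigma> \<tau>])
    finally show ?thesis .
  qed
  have "integrable ?Q\<sigma> (\<lambda>x. g (permute_coords n \<tau> x))" if \<tau>: "\<tau> permutes {..<n}" for \<tau>
  proof (rule Q\<sigma>.integrable_const_bound[where B = B])
    show "AE x in ?Q\<sigma>. norm (g (permute_coords n \<tau> x)) \<le> B"
      using g(2) measurable_space[OF measurable_permute_coords[OF \<tau>, of M]]
      by (intro AE_I2) (simp add: sets_eq_imp_space_eq[OF sets_Q\<sigma>])
    show "(\<lambda>x. g (permute_coords n \<tau> x)) \<in> borel_measurable ?Q\<sigma>"
      using measurable_comp[OF measurable_permute_coords[OF \<tau>] g(1)]
      by (simp add: measurable_cong_sets[OF sets_Q\<sigma> refl] o_def)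
  qed
  then have "(\<integral>x. symmetrize n g x \<partial>?Q\<sigma>)
      = (\<Sum>\<tau> | \<tau> permutes {..<n}. \<integral>x. g (permute_coords n \<tau> x) \<partial>?Q\<sigma>) / fact n"
    by (simp add: symmetrize_def Bochner_Integration.integral_sum)
  also have "\<dots> \<le> (\<Sum>\<tau> | \<tau> permutes {..<n}. ?worst) / fact n"
    by (intro divide_right_mono sum_mono permuted_le) auto
  also have "\<dots> = ?worst"
    using card_permutations[of "{..<n}" n] by simp
  finally show ?thesis .
qed

lemma Max_integral_symmetrize_le:
  fixes Q :: "nat \<Rightarrow> 'a measure" and g :: "(nat \<Rightarrow> 'a) \<Rightarrow> real"
  assumes "\<And>k. k \<in> {1..K} \<Longrightarrow> prob_space (Q k)" "\<And>k. k \<in> {1..K} \<Longrightarrow> sets (Q k) = sets M"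
    and "g \<in> borel_measurable (prodM n M)" "\<And>x. x \<in> space (prodM n M) \<Longrightarrow> \<bar>g x\<bar> \<le> B"
  shows "Max ((\<lambda>\<sigma>. \<integral>x. symmetrize n g x \<partial>PiM {..<n} (\<lambda>i. Q (\<sigma> i))) ` labelings n K \<nu>)
       \<le> Max ((\<lambda>\<sigma>. \<integral>x. g x \<partial>PiM {..<n} (\<lambda>i. Q (\<sigma> i))) ` labelings n K \<nu>)"
proof (cases "labelings n K \<nu> = {}")
  case False
  with finite_labelings integral_symmetrize_le_Max[where Q = Q and K = K and M = M, OF assms]
  show ?thesis
    by (subst Max_le_iff) auto
qed simp

theorem lemma2:
  fixes M :: "'a::linorder measure"
    and n K :: nat
    and \<nu> :: "nat \<Rightarrow> real"
    and P :: "nat \<Rightarrow> nat \<Rightarrow> 'a measure"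
    and \<psi> :: "(nat \<Rightarrow> 'a) \<Rightarrow> real"
  assumes "n \<ge> 1"
    and "\<And>\<theta> k. \<theta> \<in> {0, 1} \<Longrightarrow> k \<in> {1..K} \<Longrightarrow> prob_space (P \<theta> k)"
    and "\<And>\<theta> k. \<theta> \<in> {0, 1} \<Longrightarrow> k \<in> {1..K} \<Longrightarrow> sets (P \<theta> k) = sets M"
    and "\<psi> \<in> borel_measurable (prodM n M)"
    and "\<forall>x\<in>space (prodM n M). 0 \<le> \<psi> x \<and> \<psi> x \<le> 1"
  shows "\<exists>\<phi>. \<phi> \<in> borel_measurable (prodM n M) \<and>
             (\<forall>x\<in>space (prodM n M). 0 \<le> \<phi> x \<and> \<phi> x \<le> 1) \<and>
             symmetric_test n M \<phi> \<and>
             P_F n K \<nu> P \<phi> \<le> P_F n K \<nu> P \<psi> \<and>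
             P_M n K \<nu> P \<phi> \<le> P_M n K \<nu> P \<psi>"
proof (intro exI conjI ballI)
  have \<psi>_abs: "\<bar>\<psi> x\<bar> \<le> 1" "\<bar>1 - \<psi> x\<bar> \<le> 1" if "x \<in> space (prodM n M)" for x
    using assms(5) that by auto
  show "symmetrize n \<psi> \<in> borel_measurable (prodM n M)"
    using assms(4) by (rule measurable_symmetrize)
  show "0 \<le> symmetrize n \<psi> x" "symmetrize n \<psi> x \<le> 1" if "x \<in> space (prodM n M)" for x
    using symmetrize_bounds[OF assms(5) that] by auto
  show "symmetric_test n M (symmetrize n \<psi>)"
    using assms(4,5) by (rule symmetric_test_symmetrize)
  show "P_F n K \<nu> P (symmetrize n \<psi>) \<le> P_F n K \<nu> P \<psi>"
    unfolding P_F_def using assms(2-4) \<psi>_abs(1) by (intro Max_integral_symmetrize_le) auto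
  show "P_M n K \<nu> P (symmetrize n \<psi>) \<le> P_M n K \<nu> P \<psi>"
    unfolding P_M_def one_minus_symmetrize using assms(2-4) \<psi>_abs(2)
    by (intro Max_integral_symmetrize_le) auto
qed

end
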